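(* For all $a,b\in(0,\sqrt7)$, $$|b\sinh a-a\sinh b|\ge|a-b|\sqrt{(a\cosh a-\sinh a)(b\cosh b-\sinh b)}.$$ *)

theory Defs
  imports Complex_Main
begin

end

theory Submission
  imports Defs "HOL-Analysis.Analysis"
begin

text \<open>
  Write \<open>sinhc x = sinh x / x\<close>; its derivative \<open>g x = (x cosh x - sinh x) / x\<^sup>2\<close> is positive,
  and dividing the inequality by \<open>ab\<close> turns it into
  \<open>sinhc b - sinhc a \<ge> (b - a) \<surd>(g a g b)\<close> for \<open>a < b\<close>.
  This holds for every function whose derivative \<open>g\<close> is log-concave on \<open>[a, b]\<close>: concavity
  of \<open>ln g\<close> at the mirror points \<open>t\<close> and \<open>a + b - t\<close> gives \<open>g t g (a + b - t) \<ge> g a g b\<close>, so by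
  AM-GM the derivative of \<open>sinhc t - sinhc (a + b - t)\<close> is at least \<open>2 \<surd>(g a g b)\<close>.
  Log-concavity of \<open>g\<close> on \<open>(0, \<surd>7)\<close> amounts to the nonnegativity of an explicit combination of
  \<open>x\<close>, \<open>sinh x\<close> and \<open>cosh x\<close>, whose Taylor series starts with a positive \<open>x\<^sup>6\<close>-term
  that dominates the (negative) remaining terms as long as \<open>x\<^sup>2 \<le> 7\<close>.
\<close>

subsection \<open>Increments of functions with log-concave derivative\<close>

lemma log_concave_reflection_ge:
  fixes g :: "real \<Rightarrow> real"
  assumes ab: "a < b" and t: "t \<in> {a..b}"
    and pos: "\<And>t. t \<in> {a..b} \<Longrightarrow> 0 < g t"
    and conc: "concave_on {a..b} (\<lambda>t. ln (g t))"
  shows "g a * g b \<le> g t * g (a + b - t)"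
proof -
  define s where "s = (t - a) / (b - a)"
  have s: "0 \<le> s" "s \<le> 1" using t ab by (auto simp: s_def field_simps)
  have ends: "a \<in> {a..b}" "b \<in> {a..b}" using ab by auto
  have "s * (b - a) = t - a" using ab by (simp add: s_def)
  then have "(1 - s) *\<^sub>R a + s *\<^sub>R b = t" "(1 - s) *\<^sub>R b + s *\<^sub>R a = a + b - t"
    by (simp_all add: algebra_simps)
  then have "(1 - s) * ln (g a) + s * ln (g b) \<le> ln (g t)"
    and "(1 - s) * ln (g b) + s * ln (g a) \<le> ln (g (a + b - t))"
    using concave_onD[OF conc s ends] concave_onD[OF conc s ends(2,1)] by auto
  moreover have "0 < g a" "0 < g b" "0 < g t" "0 < g (a + b - t)"
    using pos ends t by auto
  ultimately have "ln (g a * g b) \<le> ln (g t * g (a + b - t))"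
    by (simp add: ln_mult algebra_simps)
  then show ?thesis
    using pos ends t by simp
qed

lemma increment_ge_of_log_concave_deriv:
  fixes f g :: "real \<Rightarrow> real"
  assumes ab: "a < b"
    and deriv: "\<And>t. t \<in> {a..b} \<Longrightarrow> (f has_real_derivative g t) (at t)"
    and pos: "\<And>t. t \<in> {a..b} \<Longrightarrow> 0 < g t"
    and conc: "concave_on {a..b} (\<lambda>t. ln (g t))"
  shows "(b - a) * sqrt (g a * g b) \<le> f b - f a"
proof -
  define F where "F t = f t - f (a + b - t)" for t
  have refl: "a + b - t \<in> {a..b}" if "t \<in> {a..b}" for t
    using that by auto
  have F_deriv: "(F has_real_derivative g t + g (a + b - t)) (at t)" if "a \<le> t" "t \<le> b" for t
  proof -
    have "((\<lambda>t. f (a + b - t)) has_real_derivative g (a + b - t) * (- 1)) (at t)"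
      using that deriv[OF refl, of t]
      by (intro DERIV_chain2[of f _ "\<lambda>t. a + b - t"]) (auto intro!: derivative_eq_intros)
    then show ?thesis
      unfolding F_def[abs_def] using that by (auto intro!: derivative_eq_intros deriv)
  qed
  then obtain z where z: "a < z" "z < b" and mvt: "F b - F a = (b - a) * (g z + g (a + b - z))"
    using MVT2[OF ab F_deriv] by blast
  have zs: "z \<in> {a..b}" "a + b - z \<in> {a..b}" using z by auto
  have "2 * sqrt (g a * g b) \<le> 2 * sqrt (g z * g (a + b - z))"
    using log_concave_reflection_ge[OF ab zs(1) pos conc] by simp
  also have "\<dots> \<le> g z + g (a + b - z)"
    using arith_geo_mean_sqrt[of "g z" "g (a + b - z)"] pos[OF zs(1)] pos[OF zs(2)] by simp
  finally have "2 * ((b - a) * sqrt (g a * g b)) \<le> F b - F a"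
    using mvt ab by (simp add: mult_left_mono)
  then show ?thesis by (simp add: F_def)
qed

subsection \<open>A Taylor series estimate\<close>

lemma cosh_sums_even: "(\<lambda>n. y^(2*n) / fact (2*n)) sums cosh (y::real)"
proof -
  have "(\<lambda>n. \<Sum>i = n*2..<n*2+2. if even i then y^i /\<^sub>R fact i else 0) sums cosh y"
    by (rule sums_group[OF cosh_converges]) simp
  moreover have "(\<Sum>i = n*2..<n*2+2. if even i then y^i /\<^sub>R fact i else 0) = y^(2*n) / fact (2*n)"
    for n
    by (simp add: mult.commute divide_inverse)
  ultimately show ?thesis by simp
qed

lemma sinh_sums_odd: "(\<lambda>n. y^(2*n+1) / fact (2*n+1)) sums sinh (y::real)"
proof -
  have "(\<lambda>n. \<Sum>i = n*2..<n*2+2. if even i then 0 else y^i /\<^sub>R fact i) sums sinh y"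
    by (rule sums_group[OF sinh_converges]) simp
  moreover have "(\<Sum>i = n*2..<n*2+2. if even i then 0 else y^i /\<^sub>R fact i) = y^(2*n+1) / fact (2*n+1)"
    for n
    by (simp add: mult.commute divide_inverse)
  ultimately show ?thesis by simp
qed

text \<open>
  \<open>Q (2 x) = 2 log_concavity_numer x\<close>, where \<open>log_concavity_numer\<close> (defined below) is the
  numerator of \<open>-(ln dsinhc)''\<close>; doubling the argument turns the squares of \<open>sinh\<close> and
  \<open>cosh\<close> into single hyperbolic functions, so \<open>Q\<close> has a simple Taylor series.
\<close>

definition Q :: "real \<Rightarrow> real" where
  "Q y = 2 * y * sinh y - (y^2/4 + 2) * cosh y + 2 - 3 * y^2/4 - y^4/8"

lemma Q_coeff_eq:
  "2 / fact (2*n+1) - 1 / (4 * fact (2*n)) - 2 / fact (2*n+2) =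
     (2 * real n + 1) * (3 - real n) / (2 * fact (2*n+2) :: real)"
proof -
  define F :: real where "F = fact (2*n)"
  have e: "fact (2*n+1) = (2 * real n + 1) * F"
    "fact (2*n+2) = (2 * real n + 2) * (2 * real n + 1) * F"
    "fact (2*n) = F"
    by (simp_all add: F_def algebra_simps)
  have "0 < F" "0 < 2 * real n + 1" "0 < 2 * real n + 2"
    by (simp_all add: F_def)
  then show ?thesis unfolding e by (simp add: divide_simps) (simp add: algebra_simps)
qed

lemma Q_plus_low_terms_sums:
  "(\<lambda>n. (2 * real n + 1) * (3 - real n) / (2 * fact (2*n+2)) * y^(2*n+2))
     sums (Q y + 3 * y^2/4 + y^4/8)"
proof -
  have c1: "(\<lambda>n. y^(2*n+2) / fact (2*n+2)) sums (cosh y - 1)"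
    using cosh_sums_even[of y] sums_Suc_iff[of "\<lambda>n. y^(2*n) / fact (2*n)"] by simp
  have "(\<lambda>n. 2 * y * (y^(2*n+1) / fact (2*n+1)) - y^2/4 * (y^(2*n) / fact (2*n))
              - 2 * (y^(2*n+2) / fact (2*n+2)))
        sums (2 * y * sinh y - y^2/4 * cosh y - 2 * (cosh y - 1))"
    by (intro sums_diff sums_mult sinh_sums_odd cosh_sums_even c1)
  moreover have "2 * y * (y^(2*n+1) / fact (2*n+1)) - y^2/4 * (y^(2*n) / fact (2*n))
                   - 2 * (y^(2*n+2) / fact (2*n+2))
      = (2/fact (2*n+1) - 1/(4 * fact (2*n)) - 2/fact (2*n+2)) * y^(2*n+2)" for n
    by (simp add: field_simps power_add power_mult power2_eq_square)
  ultimately show ?thesis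
    unfolding Q_coeff_eq by (simp add: Q_def algebra_simps)
qed

lemma Q_sums:
  "(\<lambda>m. (2 * real m + 5) * (1 - real m) / (2 * fact (2*m+6)) * y^(2*m+6)) sums Q y"
proof -
  let ?t = "\<lambda>n. (2 * real n + 1) * (3 - real n) / (2 * fact (2*n+2)) * y^(2*n+2)"
  have "(\<Sum>i<2. ?t i) = 3 * y^2/4 + y^4/8"
    by (simp add: numeral_eq_Suc)
  then have "?t sums (Q y + (\<Sum>i<2. ?t i))"
    using Q_plus_low_terms_sums[of y] by (simp only: add.assoc)
  then have "(\<lambda>i. ?t (i + 2)) sums Q y"
    by (rule sums_iff_shift[THEN iffD2])
  moreover have "?t (m + 2) = (2 * real m + 5) * (1 - real m) / (2 * fact (2*m+6)) * y^(2*m+6)"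
    for m
  proof -
    have "2 * (m + 2) + 2 = 2*m+6" by simp
    moreover have "(2 * real (m + 2) + 1) * (3 - real (m + 2)) = (2 * real m + 5) * (1 - real m)"
      by (simp add: algebra_simps)
    ultimately show ?thesis by (simp only:)
  qed
  ultimately show ?thesis by simp
qed

lemma Q_coeff_bound_nat: "(2*k+9) * (k+1) * (28^(k+2) * 1000 * 5^k) \<le> 2 * fact (2*k+10) * 3^k"
proof (induction k)
  case 0
  then show ?case by (simp add: fact_numeral)
next
  case (Suc k)
  let ?A = "28^(k+2) * 1000 * 5^k :: nat" and ?B = "2 * fact (2*k+10) * 3^k :: nat"
  have fact_step: "fact (2 * Suc k + 10) = (2*k+12) * (2*k+11) * fact (2*k+10)"
  proof -
    have "2 * Suc k + 10 = Suc (Suc (2*k+10))" by simp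
    then show ?thesis by (simp only: fact_Suc) (simp add: algebra_simps)
  qed
  have "(2 * Suc k + 9) * (Suc k + 1) * (28^(Suc k + 2) * 1000 * 5^Suc k)
        = (2*k+11) * (140 * (k+2)) * ?A"
    by (simp add: algebra_simps)
  also have "\<dots> \<le> (2*k+11) * (3 * (2*k+12) * (2*k+9) * (k+1)) * ?A"
    by (intro mult_right_mono mult_left_mono) (simp_all add: algebra_simps)
  also have "\<dots> = 3 * (2*k+12) * (2*k+11) * ((2*k+9) * (k+1) * ?A)"
    by (simp add: algebra_simps)
  also have "\<dots> \<le> 3 * (2*k+12) * (2*k+11) * ?B"
    using Suc.IH by (intro mult_left_mono) auto
  also have "\<dots> = 2 * fact (2 * Suc k + 10) * 3^Suc k"
    unfolding fact_step by (simp add: algebra_simps)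
  finally show ?case .
qed

lemma Q_tail_term_bound:
  assumes "m \<ge> 2" "0 \<le> y" "y^2 \<le> (28::real)"
  shows "(2 * real m + 5) * (real m - 1) / (2 * fact (2*m+6)) * y^(2*m+6) \<le> y^6/1000 * (3/5)^(m-2)"
proof -
  obtain k where k: "m = k + 2" using assms(1) by (metis add.commute le_Suc_ex)
  have "y^(2*m+6) = (y^2)^m * y^6" by (simp add: power_add power_mult)
  also have "\<dots> \<le> 28^m * y^6" using assms by (intro mult_right_mono power_mono) auto
  finally have y_pow: "y^(2*m+6) \<le> 28^m * y^6" .
  have "real ((2*k+9) * (k+1) * (28^(k+2) * 1000 * 5^k)) \<le> real (2 * fact (2*k+10) * 3^k)"
    using Q_coeff_bound_nat[of k] by linarith
  then have "(2 * real k + 9) * (real k + 1) * (28^(k+2) * 1000 * 5^k) \<le> 2 * fact (2*k+10) * 3^k"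
    by (simp only: of_nat_mult of_nat_add of_nat_power of_nat_numeral of_nat_fact of_nat_1)
  moreover have "(0::real) < 2 * fact (2*k+10)" by simp
  ultimately have coeff:
    "(2 * real k + 9) * (real k + 1) * 28^(k+2) / (2 * fact (2*k+10)) \<le> (3/5)^k / 1000"
    by (simp add: field_simps power_divide mult.assoc)
  have "(2 * real m + 5) * (real m - 1) / (2 * fact (2*m+6)) * y^(2*m+6)
        \<le> (2 * real m + 5) * (real m - 1) / (2 * fact (2*m+6)) * (28^m * y^6)"
    using y_pow assms by (intro mult_left_mono) auto
  also have "\<dots> = y^6 * ((2 * real k + 9) * (real k + 1) * 28^(k+2) / (2 * fact (2*k+10)))"
    unfolding k by (simp add: algebra_simps)
  also have "\<dots> \<le> y^6 * ((3/5)^k / 1000)"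
    using coeff by (intro mult_left_mono) simp_all
  finally show ?thesis unfolding k by simp
qed

lemma Q_nonneg:
  assumes "0 \<le> y" "y^2 \<le> (28::real)"
  shows "0 \<le> Q y"
proof -
  let ?G = "\<lambda>m. if m < 2 then 0 else y^6/1000 * (3/5)^(m-2)"
  let ?e = "\<lambda>m. (if m = 0 then y^6/288 else 0) - ?G m"
  have "(\<lambda>m. y^6/1000 * (3/5)^m) sums (y^6/1000 * (1 / (1 - 3/5)))"
    by (intro sums_mult geometric_sums) simp
  then have "(\<lambda>m. ?G (m + 2)) sums (y^6/1000 * (1 / (1 - 3/5)))"
    by simp
  then have "?G sums (y^6/1000 * (1 / (1 - 3/5)))"
    using sums_iff_shift[of ?G 2] by (simp add: numeral_eq_Suc)
  then have minorant_sums: "?e sums (y^6/288 - y^6/1000 * (1 / (1 - 3/5)))"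
    using sums_single[of 0 "\<lambda>_. y^6/288"] by (intro sums_diff) simp_all
  have "?e m \<le> (2 * real m + 5) * (1 - real m) / (2 * fact (2*m+6)) * y^(2*m+6)" for m
  proof (cases "m < 2")
    case True
    then have "m = 0 \<or> m = 1" by auto
    then show ?thesis using assms by (auto simp: fact_numeral)
  next
    case False
    have "(2 * real m + 5) * (1 - real m) = - ((2 * real m + 5) * (real m - 1))"
      by (simp add: algebra_simps)
    then show ?thesis
      using Q_tail_term_bound[of m y] assms False by simp
  qed
  \<comment> \<open>the tail terms add up to at least \<open>-y\<^sup>6/400\<close>, less than the leading term \<open>y\<^sup>6/288\<close>\<close>
  then have "y^6/288 - y^6/1000 * (1 / (1 - 3/5)) \<le> Q y"
    by (rule sums_le[OF _ minorant_sums Q_sums])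
  moreover have "0 \<le> y^6/288 - y^6/1000 * (1 / (1 - 3/5))" using assms by simp
  ultimately show ?thesis by linarith
qed

subsection \<open>Log-concavity of the derivative of \<open>sinh x / x\<close>\<close>

definition cosh_sinh_gap :: "real \<Rightarrow> real" where
  "cosh_sinh_gap x = x * cosh x - sinh x"

definition dsinhc :: "real \<Rightarrow> real" where
  "dsinhc x = cosh_sinh_gap x / x^2"

definition log_dsinhc_deriv :: "real \<Rightarrow> real" where
  "log_dsinhc_deriv x = (x^2 * sinh x - 2 * cosh_sinh_gap x) / (x * cosh_sinh_gap x)"

definition log_concavity_numer :: "real \<Rightarrow> real" where
  "log_concavity_numer x = x^2 * ((sinh x)^2 - x^2) - 2 * (cosh_sinh_gap x)^2"

lemma cosh_sinh_gap_deriv: "(cosh_sinh_gap has_real_derivative x * sinh x) (at x)"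
  unfolding cosh_sinh_gap_def by (rule derivative_eq_intros refl | simp)+

lemma cosh_sinh_gap_pos:
  assumes "x > 0"
  shows "cosh_sinh_gap x > 0"
proof -
  obtain z where "0 < z" "z < x" "cosh_sinh_gap x - cosh_sinh_gap 0 = (x - 0) * (z * sinh z)"
    using MVT2[of 0 x cosh_sinh_gap "\<lambda>t. t * sinh t"] cosh_sinh_gap_deriv assms by blast
  then show ?thesis using assms by (simp add: cosh_sinh_gap_def)
qed

lemma dsinhc_pos: "x > 0 \<Longrightarrow> dsinhc x > 0"
  using cosh_sinh_gap_pos by (simp add: dsinhc_def)

lemma sinhc_has_deriv:
  assumes "x \<noteq> 0"
  shows "((\<lambda>x. sinh x / x) has_real_derivative dsinhc x) (at x)"
proof -
  have "((\<lambda>x. sinh x / x) has_real_derivative (cosh x * x - 1 * sinh x) / x^2) (at x)"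
    by (rule DERIV_quotient[THEN DERIV_cong])
       (use assms in \<open>auto intro!: derivative_eq_intros simp: power2_eq_square\<close>)
  then show ?thesis
    by (simp add: dsinhc_def cosh_sinh_gap_def algebra_simps)
qed

lemma log_dsinhc_has_deriv:
  assumes "x > 0"
  shows "((\<lambda>x. ln (dsinhc x)) has_real_derivative log_dsinhc_deriv x) (at x)"
proof -
  have gap: "cosh_sinh_gap x > 0" using cosh_sinh_gap_pos assms by simp
  have "(dsinhc has_real_derivative
          (x * sinh x * x^2 - 2 * x * cosh_sinh_gap x) / (x^2)^2) (at x)"
    unfolding dsinhc_def[abs_def]
    by (rule DERIV_quotient[OF cosh_sinh_gap_deriv, THEN DERIV_cong])
       (use assms in \<open>auto intro!: derivative_eq_intros\<close>)
  from DERIV_chain2[OF DERIV_ln_divide this] assms gap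
  have "((\<lambda>x. ln (dsinhc x)) has_real_derivative
          1 / dsinhc x * ((x * sinh x * x^2 - 2 * x * cosh_sinh_gap x) / (x^2)^2)) (at x)"
    by (simp add: dsinhc_def)
  moreover have "1 / dsinhc x * ((x * sinh x * x^2 - 2 * x * cosh_sinh_gap x) / (x^2)^2)
      = log_dsinhc_deriv x"
    using assms gap by (simp add: dsinhc_def log_dsinhc_deriv_def field_simps power2_eq_square)
  ultimately show ?thesis by simp
qed

lemma log_dsinhc_deriv_has_deriv:
  assumes "x > 0"
  shows "(log_dsinhc_deriv has_real_derivative
           - log_concavity_numer x / (x^2 * (cosh_sinh_gap x)^2)) (at x)"
proof -
  have gap: "cosh_sinh_gap x > 0" using cosh_sinh_gap_pos assms by simp
  have "(log_dsinhc_deriv has_real_derivative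
          (x^2 * cosh x * (x * cosh_sinh_gap x)
           - (cosh_sinh_gap x + x^2 * sinh x) * (x^2 * sinh x - 2 * cosh_sinh_gap x))
          / (x * cosh_sinh_gap x)^2) (at x)"
    unfolding log_dsinhc_deriv_def[abs_def]
    by (rule DERIV_quotient[THEN DERIV_cong])
       (use assms gap in \<open>auto intro!: derivative_eq_intros cosh_sinh_gap_deriv
          simp: cosh_sinh_gap_def power2_eq_square algebra_simps\<close>)
  moreover have "x^2 * cosh x * (x * cosh_sinh_gap x)
           - (cosh_sinh_gap x + x^2 * sinh x) * (x^2 * sinh x - 2 * cosh_sinh_gap x)
         = - log_concavity_numer x"
  proof -
    have "x^2 * cosh x * (x * cosh_sinh_gap x)
          - (cosh_sinh_gap x + x^2 * sinh x) * (x^2 * sinh x - 2 * cosh_sinh_gap x)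
          + log_concavity_numer x = x^4 * ((cosh x)^2 - (sinh x)^2 - 1)"
      by (simp add: log_concavity_numer_def cosh_sinh_gap_def algebra_simps power2_eq_square
          eval_nat_numeral)
    then show ?thesis using cosh_square_eq[of x] by simp
  qed
  ultimately show ?thesis by (simp add: power_mult_distrib)
qed

lemma log_concavity_numer_eq_Q_double: "2 * log_concavity_numer x = Q (2 * x)"
  unfolding log_concavity_numer_def Q_def cosh_sinh_gap_def sinh_double cosh_double
  using cosh_square_eq[of x] by (simp add: algebra_simps power2_eq_square eval_nat_numeral)

lemma log_concavity_numer_nonneg:
  assumes "0 < x" "x < sqrt 7"
  shows "log_concavity_numer x \<ge> 0"
proof -
  have "x^2 < 7" using assms real_sqrt_less_iff by (metis abs_of_pos real_sqrt_abs)
  then have "Q (2 * x) \<ge> 0" using assms by (intro Q_nonneg) (simp_all add: power_mult_distrib)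
  then show ?thesis using log_concavity_numer_eq_Q_double[of x] by simp
qed

lemma log_dsinhc_concave:
  assumes "0 < a" "b < sqrt 7"
  shows "concave_on {a..b} (\<lambda>x. ln (dsinhc x))"
proof (rule f''_le0_imp_concave)
  fix x assume "x \<in> {a..b}"
  then have x: "0 < x" "x < sqrt 7" using assms by auto
  show "((\<lambda>x. ln (dsinhc x)) has_real_derivative log_dsinhc_deriv x) (at x)"
    using log_dsinhc_has_deriv x by simp
  show "(log_dsinhc_deriv has_real_derivative
          - log_concavity_numer x / (x^2 * (cosh_sinh_gap x)^2)) (at x)"
    using log_dsinhc_deriv_has_deriv x by simp
  show "- log_concavity_numer x / (x^2 * (cosh_sinh_gap x)^2) \<le> 0"
    using log_concavity_numer_nonneg[OF x] by simp
qed simp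

lemma sinhc_increment_ge:
  assumes "0 < a" "a < b" "b < sqrt 7"
  shows "(b - a) * sqrt (dsinhc a * dsinhc b) \<le> sinh b / b - sinh a / a"
  using assms
  by (intro increment_ge_of_log_concave_deriv[where f = "\<lambda>x. sinh x / x"])
     (auto intro: sinhc_has_deriv dsinhc_pos log_dsinhc_concave)

lemma cross_sinh_ge:
  assumes "0 < a" "a < b" "b < sqrt 7"
  shows "(b - a) * sqrt (cosh_sinh_gap a * cosh_sinh_gap b) \<le> a * sinh b - b * sinh a"
proof -
  have "cosh_sinh_gap a * cosh_sinh_gap b = (a * b)^2 * (dsinhc a * dsinhc b)"
    using assms by (simp add: dsinhc_def power_mult_distrib)
  then have "sqrt (cosh_sinh_gap a * cosh_sinh_gap b) = a * b * sqrt (dsinhc a * dsinhc b)"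
    using assms by (simp add: real_sqrt_mult)
  moreover have "a * sinh b - b * sinh a = a * b * (sinh b / b - sinh a / a)"
    using assms by (simp add: field_simps)
  moreover have "a * b * ((b - a) * sqrt (dsinhc a * dsinhc b))
      \<le> a * b * (sinh b / b - sinh a / a)"
    using sinhc_increment_ge[OF assms] assms by (intro mult_left_mono) auto
  ultimately show ?thesis by (simp add: algebra_simps)
qed

theorem mainTheorem8:
  fixes a b :: real
  assumes "0 < a" "a < sqrt 7" "0 < b" "b < sqrt 7"
  shows "\<bar>b * sinh a - a * sinh b\<bar> \<ge>
           \<bar>a - b\<bar> * sqrt ((a * cosh a - sinh a) * (b * cosh b - sinh b))"
  using assms
proof (induction a b rule: linorder_wlog)
  case (le a b)
  show ?case
  proof (cases "a = b")
    case False
    then have "a < b" using le by simp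
    have "0 \<le> (b - a) * sqrt (cosh_sinh_gap a * cosh_sinh_gap b)"
      using le \<open>a < b\<close> cosh_sinh_gap_pos[of a] cosh_sinh_gap_pos[of b] by simp
    then show ?thesis
      using cross_sinh_ge[OF le(2) \<open>a < b\<close> le(5)] \<open>a < b\<close>
      by (simp add: cosh_sinh_gap_def)
  qed simp
next
  case (sym a b)
  then show ?case by (simp add: abs_minus_commute mult.commute)
qed

end
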